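(* Let $\mathcal{F}$ be a linear invariant family of holomorphic mappings in $\mathbb{D}$ of order $\beta<\infty$. Then for every univalent mapping $\varphi\in\mathcal{F}$, $$(1-|z|^2)\left|\frac{z\varphi'(z)}{\varphi(z)}\right|\leq 2\beta\quad\text{for all } z\in\mathbb{D}.$$
   Context: A family $\mathcal{F}$ of locally univalent analytic functions $f(z)=z+a_2z^2+\cdots$ in $\mathbb{D}$ is a linear invariant family if for every $f\in\mathcal{F}$ and every $a\in\mathbb{D}$, the function $\frac{f(\varphi_a(z))-f(a)}{(1-|a|^2)f'(a)}$ belongs to $\mathcal{F}$, where $\varphi_a(z)=\frac{z+a}{1+\overline{a}z}$. Its order is $\beta=\sup_{f\in\mathcal{F}}|a_2(f)|$. *)

theory Defs
  imports "HOL-Complex_Analysis.Complex_Analysis"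
begin

abbreviation unit_disk :: "complex set" where
  "unit_disk \<equiv> ball 0 1"

definition normalized_lu :: "(complex \<Rightarrow> complex) \<Rightarrow> bool" where
  "normalized_lu f \<longleftrightarrow> f holomorphic_on unit_disk \<and> f 0 = 0 \<and> deriv f 0 = 1
     \<and> (\<forall>z\<in>unit_disk. deriv f z \<noteq> 0)"

definition disk_aut :: "complex \<Rightarrow> complex \<Rightarrow> complex" where
  "disk_aut a z = (z + a) / (1 + cnj a * z)"

definition koebe_transform :: "(complex \<Rightarrow> complex) \<Rightarrow> complex \<Rightarrow> complex \<Rightarrow> complex" where
  "koebe_transform f a = (\<lambda>z. (f (disk_aut a z) - f a) /
       (complex_of_real (1 - (cmod a)\<^sup>2) * deriv f a))"

definition linear_invariant_family :: "(complex \<Rightarrow> complex) set \<Rightarrow> bool" where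
  "linear_invariant_family F \<longleftrightarrow> (\<forall>f\<in>F. normalized_lu f) \<and>
     (\<forall>f\<in>F. \<forall>a\<in>unit_disk. koebe_transform f a \<in> F)"

definition coeff2 :: "(complex \<Rightarrow> complex) \<Rightarrow> complex" where
  "coeff2 f = deriv (deriv f) 0 / 2"

text \<open>Order of the family (meaningful when finite, i.e. bounded above).\<close>
definition lif_order :: "(complex \<Rightarrow> complex) set \<Rightarrow> real" where
  "lif_order F = (SUP f\<in>F. cmod (coeff2 f))"

end

theory Submission
  imports Defs
begin

text \<open>The Koebe transform of \<open>f \<in> F\<close> at \<open>a\<close> has second coefficient
  \<open>((1 - |a|\<^sup>2) f''(a)/f'(a) - 2 cnj a)/2\<close>, so this quantity is bounded by \<open>2\<beta>\<close>.
  Integrating it over circles gives \<open>\<beta> \<ge> 1\<close>, and along rays it gives the distortion bound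
  \<open>|f'(z)| \<ge> (1 - r)\<^sup>\<beta>\<^sup>-\<^sup>1 / (1 + r)\<^sup>\<beta>\<^sup>+\<^sup>1\<close>, \<open>r = |z|\<close>.
  If \<open>g \<in> F\<close> is univalent and \<open>w\<close> is omitted by \<open>g\<close> on \<open>|z| < r\<close>, let \<open>w\<^sub>0\<close> be the first point of
  \<open>[0, w]\<close> outside \<open>g(|z| < r)\<close>; the preimage of \<open>[0, w\<^sub>0)\<close> runs from \<open>0\<close> out to \<open>|z| = r\<close>, so
  integrating the distortion bound along it gives
  \<open>|w| \<ge> |w\<^sub>0| \<ge> \<integral>\<^sub>0\<^sup>r (1 - t)\<^sup>\<beta>\<^sup>-\<^sup>1 / (1 + t)\<^sup>\<beta>\<^sup>+\<^sup>1 dt \<ge> r/(2\<beta>)\<close>.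
  Applying this to the Koebe transform of \<open>\<phi>\<close> at \<open>z\<close>, whose value at \<open>-z\<close> is
  \<open>-\<phi>(z)/((1 - |z|\<^sup>2) \<phi>'(z))\<close> and is not attained on \<open>|\<zeta>| < |z|\<close> by univalence, gives the theorem.\<close>

lemma unit_disk_one_minus_norm_sq_pos:
  "z \<in> unit_disk \<Longrightarrow> 0 < 1 - (cmod z)\<^sup>2"
  by (simp add: abs_square_less_1)

lemma unit_disk_of_real_one_minus_norm_sq_nonzero:
  "z \<in> unit_disk \<Longrightarrow> complex_of_real (1 - (cmod z)\<^sup>2) \<noteq> 0"
  using unit_disk_one_minus_norm_sq_pos by (simp only: of_real_eq_0_iff) fastforce

lemma disk_aut_denom_nonzero:
  assumes "a \<in> unit_disk" "z \<in> unit_disk"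
  shows "1 + cnj a * z \<noteq> 0"
proof
  assume "1 + cnj a * z = 0"
  then have "cmod (cnj a * z) = 1"
    by (metis add_eq_0_iff norm_minus_cancel norm_one)
  moreover have "cmod (cnj a * z) < 1"
    using assms by (simp add: norm_mult) (metis mult_strict_mono' mult_1 norm_ge_zero)
  ultimately show False by simp
qed

lemma disk_aut_0 [simp]: "disk_aut a 0 = a"
  by (simp add: disk_aut_def)

lemma disk_aut_norm_identity:
  "(cmod (1 + cnj a * z))\<^sup>2 - (cmod (z + a))\<^sup>2 = (1 - (cmod a)\<^sup>2) * (1 - (cmod z)\<^sup>2)"
  unfolding cmod_power2 by (simp add: algebra_simps power2_eq_square)

lemma disk_aut_in_unit_disk:
  assumes "a \<in> unit_disk" "z \<in> unit_disk"
  shows "disk_aut a z \<in> unit_disk"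
proof -
  have "(1 - (cmod a)\<^sup>2) * (1 - (cmod z)\<^sup>2) > 0"
    using assms by (simp add: abs_square_less_1)
  then have "(cmod (z + a))\<^sup>2 < (cmod (1 + cnj a * z))\<^sup>2"
    using disk_aut_norm_identity[of a z] by linarith
  then have "cmod (z + a) < cmod (1 + cnj a * z)"
    using power2_less_imp_less by fastforce
  then show ?thesis
    using disk_aut_denom_nonzero[OF assms] by (simp add: disk_aut_def norm_divide divide_less_eq)
qed

lemma inj_on_disk_aut:
  assumes "a \<in> unit_disk"
  shows "inj_on (disk_aut a) unit_disk"
proof (rule inj_onI)
  fix x y
  assume "x \<in> unit_disk" "y \<in> unit_disk" "disk_aut a x = disk_aut a y"
  then have "(x + a) * (1 + cnj a * y) = (y + a) * (1 + cnj a * x)"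
    using disk_aut_denom_nonzero[OF assms] by (simp add: disk_aut_def field_simps)
  then have "(x - y) * (1 - a * cnj a) = 0"
    by (simp add: algebra_simps)
  moreover have "1 - a * cnj a \<noteq> 0"
    using unit_disk_of_real_one_minus_norm_sq_nonzero[OF assms]
    unfolding of_real_diff of_real_1 complex_norm_square .
  ultimately show "x = y"
    by simp
qed

lemma has_field_derivative_disk_aut:
  assumes "1 + cnj a * z \<noteq> 0"
  shows "(disk_aut a has_field_derivative of_real (1 - (cmod a)\<^sup>2) / (1 + cnj a * z)\<^sup>2) (at z)"
  unfolding disk_aut_def[abs_def] complex_norm_square of_real_diff of_real_1
  by (rule derivative_eq_intros | use assms in \<open>simp add: field_simps power2_eq_square\<close>)+

lemma normalized_lu_has_derivative:
  assumes "normalized_lu f" "w \<in> unit_disk"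
  shows "(f has_field_derivative deriv f w) (at w)"
    and "(deriv f has_field_derivative deriv (deriv f) w) (at w)"
proof -
  have "f holomorphic_on unit_disk"
    using assms(1) by (simp add: normalized_lu_def)
  then show "(f has_field_derivative deriv f w) (at w)"
    and "(deriv f has_field_derivative deriv (deriv f) w) (at w)"
    using assms(2) by (auto intro!: holomorphic_derivI holomorphic_deriv)
qed

lemma koebe_transform_has_derivative:
  assumes f: "normalized_lu f" and a: "a \<in> unit_disk" and z: "z \<in> unit_disk"
  shows "(koebe_transform f a has_field_derivative
           deriv f (disk_aut a z) / (deriv f a * (1 + cnj a * z)\<^sup>2)) (at z)"
proof -
  define R where "R = complex_of_real (1 - (cmod a)\<^sup>2)"
  have "R \<noteq> 0"
    using unit_disk_of_real_one_minus_norm_sq_nonzero[OF a] by (simp add: R_def)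
  moreover have "deriv f a \<noteq> 0" "1 + cnj a * z \<noteq> 0"
    using f a z disk_aut_denom_nonzero by (auto simp: normalized_lu_def)
  moreover have "(koebe_transform f a has_field_derivative
           (deriv f (disk_aut a z) * (R / (1 + cnj a * z)\<^sup>2) - 0) / (R * deriv f a)) (at z)"
    unfolding koebe_transform_def R_def
    by (intro DERIV_cdivide DERIV_diff DERIV_const DERIV_chain2[of f]
        normalized_lu_has_derivative(1)[OF f disk_aut_in_unit_disk[OF a z]]
        has_field_derivative_disk_aut disk_aut_denom_nonzero[OF a z])
  ultimately show ?thesis
    by (simp add: field_simps)
qed

lemma coeff2_koebe_transform:
  assumes f: "normalized_lu f" and a: "a \<in> unit_disk"
  shows "2 * coeff2 (koebe_transform f a) =
           of_real (1 - (cmod a)\<^sup>2) * deriv (deriv f) a / deriv f a - 2 * cnj a"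
proof -
  define R where "R = complex_of_real (1 - (cmod a)\<^sup>2)"
  define K where "K = (\<lambda>z. deriv f (disk_aut a z) / (deriv f a * (1 + cnj a * z)\<^sup>2))"
  have fa: "deriv f a \<noteq> 0"
    using f a by (simp add: normalized_lu_def)
  have "eventually (\<lambda>z. z \<in> unit_disk) (nhds 0)"
    by (rule eventually_nhds_in_open) auto
  then have "eventually (\<lambda>z. deriv (koebe_transform f a) z = K z) (nhds 0)"
    by eventually_elim (use koebe_transform_has_derivative[OF f a] DERIV_imp_deriv K_def in blast)
  then have "2 * coeff2 (koebe_transform f a) = deriv K 0"
    unfolding coeff2_def by (simp add: deriv_cong_ev)
  also have "\<dots> = (deriv (deriv f) a * R * (deriv f a * 1)
        - deriv f a * (deriv f a * (2 * cnj a))) / (deriv f a * 1)\<^sup>2"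
  proof (rule DERIV_imp_deriv)
    have "(deriv f has_field_derivative deriv (deriv f) a) (at (disk_aut a 0))"
      using normalized_lu_has_derivative(2)[OF f a] by simp
    moreover have "(disk_aut a has_field_derivative R) (at 0)"
      using has_field_derivative_disk_aut[of a 0] by (simp add: R_def)
    ultimately have "((\<lambda>z. deriv f (disk_aut a z)) has_field_derivative deriv (deriv f) a * R) (at 0)"
      by (rule DERIV_chain2)
    then show "(K has_field_derivative (deriv (deriv f) a * R * (deriv f a * 1)
        - deriv f a * (deriv f a * (2 * cnj a))) / (deriv f a * 1)\<^sup>2) (at 0)"
      unfolding K_def using fa by (auto intro!: derivative_eq_intros simp: power2_eq_square)
  qed
  also have "\<dots> = R * deriv (deriv f) a / deriv f a - 2 * cnj a"
    using fa by (simp add: field_simps power2_eq_square)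
  finally show ?thesis
    by (simp add: R_def)
qed

lemma koebe_transform_at_neg:
  assumes "normalized_lu f"
  shows "koebe_transform f a (- a) = - f a / (of_real (1 - (cmod a)\<^sup>2) * deriv f a)"
  using assms by (simp add: koebe_transform_def disk_aut_def normalized_lu_def)

lemma inj_on_koebe_transform:
  assumes f: "normalized_lu f" and inj: "inj_on f unit_disk" and a: "a \<in> unit_disk"
  shows "inj_on (koebe_transform f a) unit_disk"
proof (rule inj_onI)
  fix x y
  assume x: "x \<in> unit_disk" and y: "y \<in> unit_disk"
    and "koebe_transform f a x = koebe_transform f a y"
  moreover have "of_real (1 - (cmod a)\<^sup>2) * deriv f a \<noteq> 0"
    using f a unit_disk_of_real_one_minus_norm_sq_nonzero[OF a] by (simp add: normalized_lu_def)
  ultimately have "f (disk_aut a x) = f (disk_aut a y)"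
    by (simp add: koebe_transform_def)
  then have "disk_aut a x = disk_aut a y"
    using inj disk_aut_in_unit_disk[OF a x] disk_aut_in_unit_disk[OF a y] by (meson inj_onD)
  then show "x = y"
    using inj_on_disk_aut[OF a] x y by (meson inj_onD)
qed

lemma linear_invariant_familyD:
  assumes "linear_invariant_family F" "f \<in> F"
  shows "normalized_lu f" and "a \<in> unit_disk \<Longrightarrow> koebe_transform f a \<in> F"
  using assms by (auto simp: linear_invariant_family_def)

lemma norm_coeff2_le_lif_order:
  assumes "bdd_above ((\<lambda>f. cmod (coeff2 f)) ` F)" "f \<in> F"
  shows "cmod (coeff2 f) \<le> lif_order F"
  unfolding lif_order_def using assms by (rule cSUP_upper2) simp

lemma lif_order_nonneg:
  assumes "bdd_above ((\<lambda>f. cmod (coeff2 f)) ` F)" "f \<in> F"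
  shows "0 \<le> lif_order F"
  using norm_coeff2_le_lif_order[OF assms] norm_ge_zero order_trans by blast

lemma lif_koebe_coeff_bound:
  assumes L: "linear_invariant_family F" and B: "bdd_above ((\<lambda>f. cmod (coeff2 f)) ` F)"
    and f: "f \<in> F" and a: "a \<in> unit_disk"
  shows "cmod (of_real (1 - (cmod a)\<^sup>2) * deriv (deriv f) a / deriv f a - 2 * cnj a)
           \<le> 2 * lif_order F"
proof -
  have "cmod (coeff2 (koebe_transform f a)) \<le> lif_order F"
    using norm_coeff2_le_lif_order[OF B] linear_invariant_familyD(2)[OF L f a] by blast
  then show ?thesis
    using arg_cong[OF coeff2_koebe_transform[OF linear_invariant_familyD(1)[OF L f] a], of cmod]
    by (simp add: norm_mult)
qed

text \<open>Integrating the Koebe-transform bound over \<open>|z| = r\<close> kills the holomorphic term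
  \<open>f''/f'\<close>, while \<open>2 cnj z = 2 r\<^sup>2/z\<close> contributes \<open>2r\<^sup>2\<close> times \<open>2\<pi>i\<close>.\<close>

lemma lif_order_ge_radius:
  assumes L: "linear_invariant_family F" and B: "bdd_above ((\<lambda>f. cmod (coeff2 f)) ` F)"
    and f: "f \<in> F" and r: "0 < r" "r < 1"
  shows "r \<le> lif_order F"
proof -
  define \<beta> where "\<beta> = lif_order F"
  define h where "h = (\<lambda>z. deriv (deriv f) z / deriv f z)"
  define c where "c = complex_of_real (1 - r\<^sup>2)"
  have "f holomorphic_on unit_disk" "\<forall>z\<in>unit_disk. deriv f z \<noteq> 0"
    using linear_invariant_familyD(1)[OF L f] by (auto simp: normalized_lu_def)
  then have "h holomorphic_on unit_disk"
    unfolding h_def by (intro holomorphic_intros holomorphic_deriv) auto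
  moreover have "path_image (circlepath 0 r) \<subseteq> unit_disk"
    using r by (auto simp: path_image_circlepath_nonneg)
  ultimately have "(h has_contour_integral 0) (circlepath 0 r)"
    by (intro Cauchy_theorem_disc_simple) auto
  moreover have "((\<lambda>u. 1 / (u - 0)) has_contour_integral 2 * of_real pi * \<i>) (circlepath 0 r)"
    using Cauchy_integral_circlepath_simple[of "\<lambda>_. 1" 0 r 0] r by simp
  ultimately have int: "((\<lambda>u. (c * h u - of_real (2 * r\<^sup>2) * (1 / (u - 0))) / 2) has_contour_integral
                     (c * 0 - of_real (2 * r\<^sup>2) * (2 * of_real pi * \<i>)) / 2) (circlepath 0 r)"
    by (intro has_contour_integral_div has_contour_integral_diff has_contour_integral_lmul)
  have "norm ((c * h x - of_real (2 * r\<^sup>2) * (1 / (x - 0))) / 2) \<le> \<beta>" if x: "norm (x - 0) = r" for x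
  proof -
    have "x \<in> unit_disk" "x \<noteq> 0"
      using x r by auto
    moreover have "cnj x = of_real (r\<^sup>2) / x"
      using x \<open>x \<noteq> 0\<close> complex_norm_square[of x] by (simp add: field_simps)
    ultimately have "c * h x - of_real (2 * r\<^sup>2) * (1 / (x - 0)) =
        of_real (1 - (cmod x)\<^sup>2) * deriv (deriv f) x / deriv f x - 2 * cnj x"
      using x by (simp add: c_def h_def)
    then show ?thesis
      using lif_koebe_coeff_bound[OF L B f \<open>x \<in> unit_disk\<close>] by (simp add: \<beta>_def norm_divide)
  qed
  then have "norm ((c * 0 - of_real (2 * r\<^sup>2) * (2 * of_real pi * \<i>)) / 2) \<le> \<beta> * (2 * pi * r)"
    using has_contour_integral_bound_circlepath[OF int _ r(1)] lif_order_nonneg[OF B f]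
    by (simp add: \<beta>_def)
  moreover have "norm ((c * 0 - of_real (2 * r\<^sup>2) * (2 * of_real pi * \<i>)) / 2) = r * (2 * pi * r)"
    by (simp add: norm_mult power2_eq_square)
  ultimately have "r * (2 * pi * r) \<le> \<beta> * (2 * pi * r)"
    by linarith
  then show ?thesis
    unfolding \<beta>_def by (rule mult_right_le_imp_le) (use r in simp)
qed

lemma lif_order_ge_1:
  assumes L: "linear_invariant_family F" and B: "bdd_above ((\<lambda>f. cmod (coeff2 f)) ` F)"
    and f: "f \<in> F"
  shows "1 \<le> lif_order F"
  by (rule dense_le_bounded[of 0]) (simp_all add: lif_order_ge_radius[OF L B f])

definition log_distortion_bound :: "real \<Rightarrow> real \<Rightarrow> real" where
  "log_distortion_bound b t = (b - 1) * ln (1 - t) - (b + 1) * ln (1 + t)"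

text \<open>\<open>exp (log_distortion_bound b r) = (1 - r)\<^sup>b\<^sup>-\<^sup>1 / (1 + r)\<^sup>b\<^sup>+\<^sup>1\<close> is the lower bound for \<open>|f'|\<close>
  on \<open>|z| = r\<close>, and \<open>growth_bound b r\<close> is its integral over \<open>[0, r]\<close>,
  namely \<open>(1 - ((1 - r)/(1 + r))\<^sup>b)/(2b)\<close>.\<close>

definition growth_bound :: "real \<Rightarrow> real \<Rightarrow> real" where
  "growth_bound b t = (1 - exp (b * (ln (1 - t) - ln (1 + t)))) / (2 * b)"

lemma log_distortion_bound_0 [simp]: "log_distortion_bound b 0 = 0"
  by (simp add: log_distortion_bound_def)

lemma growth_bound_0 [simp]: "growth_bound b 0 = 0"
  by (simp add: growth_bound_def)

lemma has_real_derivative_log_distortion_bound: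
  assumes "\<bar>t\<bar> < 1"
  shows "(log_distortion_bound b has_real_derivative (2 * t - 2 * b) / (1 - t\<^sup>2)) (at t)"
proof -
  have t: "1 - t > 0" "1 + t > 0"
    using assms by auto
  have "(log_distortion_bound b has_real_derivative
          (b - 1) * (- 1 / (1 - t)) - (b + 1) * (1 / (1 + t))) (at t)"
    unfolding log_distortion_bound_def[abs_def] using t
    by (intro derivative_eq_intros refl) auto
  moreover have "(b - 1) * (- 1 / (1 - t)) - (b + 1) * (1 / (1 + t)) = (2 * t - 2 * b) / ((1 - t) * (1 + t))"
    using t by (simp add: field_simps)
  moreover have "(1 - t) * (1 + t) = 1 - t\<^sup>2"
    by (simp add: power2_eq_square algebra_simps)
  ultimately show ?thesis
    by simp
qed

lemma has_real_derivative_growth_bound: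
  assumes "b \<noteq> 0" "\<bar>t\<bar> < 1"
  shows "(growth_bound b has_real_derivative exp (log_distortion_bound b t)) (at t)"
proof -
  define E where "E = b * (ln (1 - t) - ln (1 + t))"
  have t: "1 - t > 0" "1 + t > 0"
    using assms by auto
  have "(growth_bound b has_real_derivative
          (0 - exp E * (b * (- 1 / (1 - t) - 1 / (1 + t)))) / (2 * b)) (at t)"
    unfolding growth_bound_def[abs_def] E_def using t assms
    by (intro derivative_eq_intros refl) auto
  moreover have "(0 - exp E * (b * (- 1 / (1 - t) - 1 / (1 + t)))) / (2 * b) = exp E / ((1 - t) * (1 + t))"
  proof -
    have "- 1 / (1 - t) - 1 / (1 + t) = - 2 / ((1 - t) * (1 + t))"
      using t by (simp add: field_simps)
    moreover have "(0 - X * (b * (- 2 / P))) / (2 * b) = X / P" for X P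
      using assms by (simp add: field_simps)
    ultimately show ?thesis
      by (simp only:)
  qed
  moreover have "log_distortion_bound b t = E - ln (1 - t) - ln (1 + t)"
    by (simp add: log_distortion_bound_def E_def algebra_simps)
  then have "exp (log_distortion_bound b t) = exp E / ((1 - t) * (1 + t))"
    using t by (simp add: exp_diff)
  ultimately show ?thesis
    by simp
qed

lemma growth_bound_mono:
  assumes "b > 0" "0 \<le> x" "x \<le> y" "y < 1"
  shows "growth_bound b x \<le> growth_bound b y"
proof -
  have "b * (ln (1 - y) - ln (1 + y)) \<le> b * (ln (1 - x) - ln (1 + x))"
    using assms by (intro mult_left_mono diff_mono) auto
  then show ?thesis
    using assms unfolding growth_bound_def by (simp add: divide_right_mono)
qed

lemma growth_bound_ge:
  assumes "b \<ge> 1" "0 \<le> r" "r < 1"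
  shows "r / (2 * b) \<le> growth_bound b r"
proof -
  have "(b - 1) * (ln (1 - r) - ln (1 + r)) \<le> 0"
    using assms by (intro mult_nonneg_nonpos) auto
  then have "b * (ln (1 - r) - ln (1 + r)) \<le> ln (1 - r) - ln (1 + r)"
    by (simp add: algebra_simps)
  also have "\<dots> \<le> ln (1 - r)"
    using assms by simp
  finally have "exp (b * (ln (1 - r) - ln (1 + r))) \<le> 1 - r"
    using assms by (metis exp_le_cancel_iff exp_ln diff_gt_0_iff_gt)
  then show ?thesis
    using assms unfolding growth_bound_def by (simp add: divide_right_mono)
qed

lemma growth_bound_le_of_below:
  assumes "b \<noteq> 0" "0 < r" "r < 1" "\<And>\<rho>. 0 \<le> \<rho> \<Longrightarrow> \<rho> < r \<Longrightarrow> growth_bound b \<rho> \<le> c"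
  shows "growth_bound b r \<le> c"
proof (rule tendsto_upperbound)
  have "isCont (growth_bound b) r"
    using DERIV_isCont[OF has_real_derivative_growth_bound] assms by simp
  then show "(growth_bound b \<longlongrightarrow> growth_bound b r) (at_left r)"
    by (simp add: isCont_def filterlim_at_split)
  have "eventually (\<lambda>\<rho>. \<rho> \<in> {0<..<r}) (at_left r)"
    using assms by (intro eventually_at_left_real) simp
  then show "eventually (\<lambda>\<rho>. growth_bound b \<rho> \<le> c) (at_left r)"
    by eventually_elim (use assms in auto)
qed simp

lemma has_vector_derivative_along_ray:
  assumes "(G has_field_derivative G') (at (of_real t * w))"
  shows "((\<lambda>x::real. G (of_real x * w)) has_vector_derivative G' * w) (at t)"
proof -
  have "((\<lambda>z. G (z * w)) has_field_derivative G' * w) (at (of_real t))"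
    using DERIV_chain2[OF assms DERIV_cmult_right[OF DERIV_ident, of w]] by simp
  then show ?thesis
    by (rule has_vector_derivative_real_field)
qed

lemma normalized_lu_log_deriv:
  assumes f: "normalized_lu f"
  obtains g where "g holomorphic_on unit_disk" "Re (g 0) = 0"
    and "\<And>x. x \<in> unit_disk \<Longrightarrow> cmod (deriv f x) = exp (Re (g x))"
    and "\<And>x. x \<in> unit_disk \<Longrightarrow> deriv g x = deriv (deriv f) x / deriv f x"
proof -
  have nz: "\<And>z. z \<in> unit_disk \<Longrightarrow> deriv f z \<noteq> 0"
    using f by (simp add: normalized_lu_def)
  moreover have "deriv f holomorphic_on unit_disk"
    using f by (auto simp: normalized_lu_def intro: holomorphic_deriv)
  ultimately obtain g where g: "g holomorphic_on unit_disk"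
    and exp_g: "\<And>x. x \<in> unit_disk \<Longrightarrow> exp (g x) = deriv f x"
    using holomorphic_logarithm_exists[of unit_disk "deriv f" 0] by auto
  have "deriv g x = deriv (deriv f) x / deriv f x" if x: "x \<in> unit_disk" for x
  proof -
    have "((\<lambda>x. exp (g x)) has_field_derivative exp (g x) * deriv g x) (at x)"
      using DERIV_chain2[OF DERIV_exp holomorphic_derivI[OF g open_ball x]] .
    then have "(deriv f has_field_derivative exp (g x) * deriv g x) (at x)"
      by (rule has_field_derivative_transform_within_open[OF _ open_ball x]) (use exp_g in auto)
    then have "exp (g x) * deriv g x = deriv (deriv f) x"
      using DERIV_unique normalized_lu_has_derivative(2)[OF f x] by blast
    then show ?thesis
      using exp_g[OF x] nz[OF x] by (simp add: field_simps)
  qed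
  moreover have norm_deriv: "cmod (deriv f x) = exp (Re (g x))" if "x \<in> unit_disk" for x
    using exp_g[OF that] by (metis norm_exp_eq_Re)
  moreover have "Re (g 0) = 0"
    using norm_deriv[of 0] f by (simp add: normalized_lu_def)
  ultimately show ?thesis
    using that g by blast
qed

lemma lif_radial_log_deriv_bound:
  assumes L: "linear_invariant_family F" and B: "bdd_above ((\<lambda>f. cmod (coeff2 f)) ` F)"
    and f: "f \<in> F" and e: "cmod e = 1" and t: "0 \<le> t" "t < 1"
  shows "(2 * t - 2 * lif_order F) / (1 - t\<^sup>2)
           \<le> Re (deriv (deriv f) (of_real t * e) / deriv f (of_real t * e) * e)"
proof -
  define a where "a = of_real t * e"
  define w where "w = deriv (deriv f) a / deriv f a"
  define u where "u = of_real (1 - t\<^sup>2) * w - 2 * cnj a"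
  have a: "a \<in> unit_disk" "cmod a = t"
    using e t by (auto simp: a_def norm_mult)
  have "e * cnj a = of_real t"
    using e complex_norm_square[of e] by (simp add: a_def mult_ac)
  moreover have "e * u = of_real (1 - t\<^sup>2) * (w * e) - 2 * (e * cnj a)"
    by (simp add: u_def algebra_simps)
  ultimately have "Re (e * u) = (1 - t\<^sup>2) * Re (w * e) - 2 * t"
    by simp
  moreover have "- cmod (e * u) \<le> Re (e * u)"
    using abs_Re_le_cmod[of "e * u"] by linarith
  moreover have "cmod (e * u) \<le> 2 * lif_order F"
    using lif_koebe_coeff_bound[OF L B f a(1)] e a(2) by (simp add: u_def w_def norm_mult)
  ultimately have "2 * t - 2 * lif_order F \<le> (1 - t\<^sup>2) * Re (w * e)"
    by linarith
  moreover have "0 < 1 - t\<^sup>2"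
    using a unit_disk_one_minus_norm_sq_pos by blast
  ultimately show ?thesis
    by (simp add: w_def a_def divide_le_eq mult.commute)
qed

lemma lif_deriv_lower_bound:
  assumes L: "linear_invariant_family F" and B: "bdd_above ((\<lambda>f. cmod (coeff2 f)) ` F)"
    and f: "f \<in> F" and z: "z \<in> unit_disk"
  shows "exp (log_distortion_bound (lif_order F) (cmod z)) \<le> cmod (deriv f z)"
proof -
  obtain g where g: "g holomorphic_on unit_disk" "Re (g 0) = 0"
    and norm_deriv: "\<And>x. x \<in> unit_disk \<Longrightarrow> cmod (deriv f x) = exp (Re (g x))"
    and deriv_g: "\<And>x. x \<in> unit_disk \<Longrightarrow> deriv g x = deriv (deriv f) x / deriv f x"
    using normalized_lu_log_deriv[OF linear_invariant_familyD(1)[OF L f]] by blast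
  define e where "e = cis (Arg z)"
  have e: "cmod e = 1" "z = of_real (cmod z) * e"
    using rcis_cmod_Arg[of z] by (simp_all add: e_def rcis_def)
  define q where "q = (\<lambda>t. Re (g (of_real t * e)) - log_distortion_bound (lif_order F) t)"
  have q_deriv: "(q has_real_derivative
      Re (deriv g (of_real t * e) * e) - (2 * t - 2 * lif_order F) / (1 - t\<^sup>2)) (at t)"
    if t: "\<bar>t\<bar> < 1" for t
  proof -
    have "of_real t * e \<in> unit_disk"
      using t e by (simp add: norm_mult)
    then have "((\<lambda>x. g (of_real x * e)) has_vector_derivative deriv g (of_real t * e) * e) (at t)"
      by (intro has_vector_derivative_along_ray holomorphic_derivI[OF g(1) open_ball])
    then show ?thesis
      unfolding q_def by (intro DERIV_diff has_field_derivative_Re has_real_derivative_log_distortion_bound t)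
  qed
  have "q 0 \<le> q (cmod z)"
  proof (rule DERIV_nonneg_imp_increasing_open[of 0 "cmod z" q])
    show "0 \<le> cmod z"
      by simp
    show "\<exists>y. (q has_real_derivative y) (at t) \<and> 0 \<le> y" if "0 < t" "t < cmod z" for t
    proof -
      have t: "\<bar>t\<bar> < 1" "of_real t * e \<in> unit_disk"
        using that z e by (auto simp: norm_mult)
      then have "0 \<le> Re (deriv g (of_real t * e) * e) - (2 * t - 2 * lif_order F) / (1 - t\<^sup>2)"
        using lif_radial_log_deriv_bound[OF L B f e(1), of t] deriv_g that by simp
      with q_deriv[OF t(1)] show ?thesis
        by blast
    qed
    show "continuous_on {0..cmod z} q"
      using z q_deriv by (intro DERIV_atLeastAtMost_imp_continuous_on) force
  qed
  then have "log_distortion_bound (lif_order F) (cmod z) \<le> Re (g z)"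
    using g(2) e(2) by (simp add: q_def)
  then show ?thesis
    using norm_deriv[OF z] by simp
qed

lemma segment_first_exit:
  fixes W :: "'a::real_normed_vector set"
  assumes W: "open W" "0 \<in> W" and w: "w \<notin> W"
  obtains w0 where "w0 \<notin> W" "norm w0 \<le> norm w" "\<And>t. 0 \<le> t \<Longrightarrow> t < 1 \<Longrightarrow> t *\<^sub>R w0 \<in> W"
proof -
  define A where "A = {t \<in> {0..1::real}. t *\<^sub>R w \<notin> W}"
  have "A = {0..1} \<inter> (\<lambda>t. t *\<^sub>R w) -` (- W)"
    by (auto simp: A_def)
  moreover have "closed ((\<lambda>t::real. t *\<^sub>R w) -` (- W))"
    using W by (intro continuous_closed_vimage) (auto intro!: continuous_intros)
  ultimately have "closed A"
    by auto
  moreover have "1 \<in> A" "bdd_below A"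
    using w by (auto simp: A_def intro: bdd_belowI[of _ 0])
  ultimately have s: "Inf A \<in> A"
    by (intro closed_contains_Inf) auto
  show ?thesis
  proof
    show "Inf A *\<^sub>R w \<notin> W"
      using s by (simp add: A_def)
    show "norm (Inf A *\<^sub>R w) \<le> norm w"
      using s by (simp add: A_def mult_left_le_one_le)
    show "t *\<^sub>R Inf A *\<^sub>R w \<in> W" if t: "0 \<le> t" "t < 1" for t
    proof (rule ccontr)
      assume "t *\<^sub>R Inf A *\<^sub>R w \<notin> W"
      then have "t * Inf A \<in> A"
        using s t by (auto simp: A_def mult_le_one)
      then have "Inf A \<le> t * Inf A"
        using \<open>bdd_below A\<close> by (rule cInf_lower)
      moreover have "0 < Inf A"
        using s W by (auto simp: A_def less_le)
      ultimately show False
        using t by simp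
    qed
  qed
qed

lemma lift_of_segment_leaves_compact:
  fixes g :: "'a::topological_space \<Rightarrow> 'b::real_normed_vector"
  assumes K: "compact K" "continuous_on K g" and w: "w \<notin> g ` K"
    and lift: "\<And>t. 0 \<le> t \<Longrightarrow> t < 1 \<Longrightarrow> g (h t) = t *\<^sub>R w"
  obtains T where "0 \<le> T" "T < 1" "h T \<notin> K"
proof -
  have "\<exists>T. 0 \<le> T \<and> T < 1 \<and> h T \<notin> K"
  proof (rule ccontr)
    assume "\<nexists>T. 0 \<le> T \<and> T < 1 \<and> h T \<notin> K"
    then have "t *\<^sub>R w \<in> g ` K" if "0 < t" "t < 1" for t
      using lift[of t] that by (metis image_eqI less_imp_le)
    then have "eventually (\<lambda>t. t *\<^sub>R w \<in> g ` K) (at_left 1)"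
      using eventually_at_left_real[of 0 1] by (auto elim!: eventually_mono)
    moreover have "((\<lambda>t. t *\<^sub>R w) \<longlongrightarrow> 1 *\<^sub>R w) (at_left (1::real))"
      by (intro tendsto_intros)
    moreover have "closed (g ` K)"
      using K by (intro compact_imp_closed compact_continuous_image)
    ultimately have "w \<in> g ` K"
      using Lim_in_closed_set[of "g ` K"] by fastforce
    with w show False ..
  qed
  then show ?thesis
    using that by blast
qed

lemma has_real_derivative_norm_path:
  fixes h :: "real \<Rightarrow> 'a::real_inner"
  assumes "(h has_vector_derivative v) (at t)" "h t \<noteq> 0"
  shows "((\<lambda>x. norm (h x)) has_real_derivative inner v (sgn (h t))) (at t)"
proof -
  have "((norm \<circ> h) has_derivative (\<lambda>y. inner y (sgn (h t))) \<circ> (\<lambda>s. s *\<^sub>R v)) (at t)"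
    using diff_chain_at[OF assms(1)[unfolded has_vector_derivative_def] has_derivative_norm[OF assms(2)]] .
  moreover have "(\<lambda>y. inner y (sgn (h t))) \<circ> (\<lambda>s. s *\<^sub>R v) = (*) (inner v (sgn (h t)))"
    by (auto simp: fun_eq_iff)
  ultimately show ?thesis
    by (simp add: has_field_derivative_def o_def)
qed

lemma growth_bound_along_curve:
  fixes h h' :: "real \<Rightarrow> complex"
  assumes b: "b > 0" and h0: "h 0 = 0"
    and h_disk: "\<And>t. 0 \<le> t \<Longrightarrow> t < 1 \<Longrightarrow> cmod (h t) < 1"
    and h_nonzero: "\<And>t. 0 < t \<Longrightarrow> t < 1 \<Longrightarrow> h t \<noteq> 0"
    and h_deriv: "\<And>t. 0 \<le> t \<Longrightarrow> t < 1 \<Longrightarrow> (h has_vector_derivative h' t) (at t)"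
    and speed: "\<And>t. 0 < t \<Longrightarrow> t < 1 \<Longrightarrow> exp (log_distortion_bound b (cmod (h t))) * cmod (h' t) \<le> c"
    and T: "0 \<le> T" "T < 1"
  shows "growth_bound b (cmod (h T)) \<le> T * c"
proof -
  define p where "p = (\<lambda>t. growth_bound b (cmod (h t)) - t * c)"
  have p_deriv: "(p has_real_derivative
      exp (log_distortion_bound b (cmod (h t))) * inner (h' t) (sgn (h t)) - 1 * c) (at t)"
    if "0 < t" "t < 1" for t
    unfolding p_def using that b h_disk
    by (intro DERIV_diff DERIV_cmult_right DERIV_ident
        DERIV_chain2[OF has_real_derivative_growth_bound has_real_derivative_norm_path]
        h_deriv h_nonzero) auto
  have "p T \<le> p 0"
  proof (rule DERIV_nonpos_imp_decreasing_open[of 0 T p])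
    show "0 \<le> T"
      by (fact T(1))
    show "\<exists>y. (p has_real_derivative y) (at t) \<and> y \<le> 0" if "0 < t" "t < T" for t
    proof -
      have "inner (h' t) (sgn (h t)) \<le> cmod (h' t)"
        using norm_cauchy_schwarz[of "h' t" "sgn (h t)"] h_nonzero[of t] that T
        by (simp add: norm_sgn)
      then have "exp (log_distortion_bound b (cmod (h t))) * inner (h' t) (sgn (h t)) \<le> c"
        using speed[of t] that T by (smt (verit) exp_gt_zero mult_left_mono)
      then show ?thesis
        using p_deriv[of t] that T by auto
    qed
    show "continuous_on {0..T} p"
    proof (intro continuous_at_imp_continuous_on ballI)
      fix t
      assume "t \<in> {0..T}"
      then have t: "0 \<le> t" "t < 1"
        using T by auto
      have "isCont (\<lambda>t. cmod (h t)) t"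
        using has_vector_derivative_continuous[OF h_deriv[OF t]] by (intro continuous_intros)
      moreover have "isCont (growth_bound b) (cmod (h t))"
        using DERIV_isCont[OF has_real_derivative_growth_bound] b h_disk[OF t] by simp
      ultimately have "isCont (\<lambda>t. growth_bound b (cmod (h t))) t"
        by (rule isCont_o2)
      then show "isCont p t"
        unfolding p_def by (intro continuous_intros)
    qed
  qed
  then show ?thesis
    by (simp add: p_def h0)
qed

lemma lif_growth_along_inverse_segment:
  assumes L: "linear_invariant_family F" and B: "bdd_above ((\<lambda>f. cmod (coeff2 f)) ` F)"
    and g: "g \<in> F" and W: "open W" "G holomorphic_on W" and G0: "G 0 = 0"
    and inverse: "\<And>w. w \<in> W \<Longrightarrow> G w \<in> unit_disk \<and> g (G w) = w \<and> deriv g (G w) * deriv G w = 1"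
    and segment: "\<And>t. 0 \<le> t \<Longrightarrow> t < 1 \<Longrightarrow> of_real t * w0 \<in> W" and w0: "w0 \<noteq> 0"
    and T: "0 \<le> T" "T < 1"
  shows "growth_bound (lif_order F) (cmod (G (of_real T * w0))) \<le> T * cmod w0"
proof (rule growth_bound_along_curve[where h = "\<lambda>t. G (of_real t * w0)"
      and h' = "\<lambda>t. deriv G (of_real t * w0) * w0"])
  show "0 < lif_order F"
    using lif_order_ge_1[OF L B g] by simp
  show "G (of_real 0 * w0) = 0"
    using G0 by simp
  show "cmod (G (of_real t * w0)) < 1" if "0 \<le> t" "t < 1" for t
    using inverse[OF segment[OF that]] by simp
  show "G (of_real t * w0) \<noteq> 0" if "0 < t" "t < 1" for t
  proof
    assume "G (of_real t * w0) = 0"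
    then have "of_real t * w0 = g 0"
      using inverse[OF segment[of t]] that by auto
    then show False
      using linear_invariant_familyD(1)[OF L g] that w0 by (simp add: normalized_lu_def)
  qed
  show "((\<lambda>t. G (of_real t * w0)) has_vector_derivative deriv G (of_real t * w0) * w0) (at t)"
    if "0 \<le> t" "t < 1" for t
    by (intro has_vector_derivative_along_ray holomorphic_derivI[OF W(2,1) segment[OF that]])
  show "exp (log_distortion_bound (lif_order F) (cmod (G (of_real t * w0))))
          * cmod (deriv G (of_real t * w0) * w0) \<le> cmod w0" if "0 < t" "t < 1" for t
  proof -
    define z where "z = G (of_real t * w0)"
    have z: "z \<in> unit_disk" "deriv g z * deriv G (of_real t * w0) = 1"
      using inverse[OF segment[of t]] that by (auto simp: z_def)
    then have "exp (log_distortion_bound (lif_order F) (cmod z)) * cmod (deriv G (of_real t * w0) * w0)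
        \<le> cmod (deriv g z) * cmod (deriv G (of_real t * w0) * w0)"
      using lif_deriv_lower_bound[OF L B g] by (intro mult_right_mono) auto
    also have "\<dots> = cmod (deriv g z * deriv G (of_real t * w0)) * cmod w0"
      by (simp add: norm_mult)
    finally show ?thesis
      using z(2) by (simp add: z_def)
  qed
qed (use T in auto)

lemma lif_omitted_value_bound:
  assumes L: "linear_invariant_family F" and B: "bdd_above ((\<lambda>f. cmod (coeff2 f)) ` F)"
    and g: "g \<in> F" and inj: "inj_on g unit_disk"
    and r: "0 < r" "r < 1" and w: "w \<notin> g ` ball 0 r"
  shows "growth_bound (lif_order F) r \<le> cmod w"
proof -
  define W where "W = g ` ball 0 r"
  have "ball 0 r \<subseteq> unit_disk"
    using r by auto
  moreover have "g holomorphic_on unit_disk" and g0: "g 0 = 0"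
    using linear_invariant_familyD(1)[OF L g] by (auto simp: normalized_lu_def)
  ultimately have g_ball: "g holomorphic_on ball 0 r" "inj_on g (ball 0 r)"
    using inj holomorphic_on_subset inj_on_subset by blast+
  then have "open W"
    unfolding W_def by (intro open_mapping_thm3) auto
  obtain G where G: "G holomorphic_on W"
    and deriv_G: "\<And>z. z \<in> ball 0 r \<Longrightarrow> deriv g z * deriv G (g z) = 1"
    and G_g: "\<And>z. z \<in> ball 0 r \<Longrightarrow> G (g z) = z"
    using holomorphic_has_inverse[OF g_ball(1) _ g_ball(2)] unfolding W_def by blast
  have inverse: "G v \<in> unit_disk \<and> g (G v) = v \<and> deriv g (G v) * deriv G v = 1" if "v \<in> W" for v
    using that \<open>ball 0 r \<subseteq> unit_disk\<close> deriv_G G_g by (auto simp: W_def)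
  have "0 \<in> W" "G 0 = 0"
    using g0 G_g[of 0] r by (auto simp: W_def rev_image_eqI)
  then obtain w0 where w0: "w0 \<notin> W" "cmod w0 \<le> cmod w"
    and segment: "\<And>t. 0 \<le> t \<Longrightarrow> t < 1 \<Longrightarrow> of_real t * w0 \<in> W"
    using segment_first_exit[OF \<open>open W\<close>] w unfolding W_def by (metis scaleR_conv_of_real)
  have "w0 \<noteq> 0"
    using w0(1) \<open>0 \<in> W\<close> by auto
  have "growth_bound (lif_order F) \<rho> \<le> cmod w0" if \<rho>: "0 \<le> \<rho>" "\<rho> < r" for \<rho>
  proof -
    have "cball 0 \<rho> \<subseteq> ball 0 r"
      using \<rho> by auto
    then have "continuous_on (cball 0 \<rho>) g" "w0 \<notin> g ` cball 0 \<rho>"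
      using g_ball(1) holomorphic_on_imp_continuous_on continuous_on_subset w0(1)
      by (blast, auto simp: W_def)
    moreover have "g (G (of_real t * w0)) = t *\<^sub>R w0" if "0 \<le> t" "t < 1" for t
      using inverse[OF segment[OF that]] by (simp add: scaleR_conv_of_real)
    ultimately obtain T where T: "0 \<le> T" "T < 1" "G (of_real T * w0) \<notin> cball 0 \<rho>"
      by (rule lift_of_segment_leaves_compact[OF compact_cball])
    have "growth_bound (lif_order F) \<rho> \<le> growth_bound (lif_order F) (cmod (G (of_real T * w0)))"
      using T \<rho> inverse[OF segment[OF T(1,2)]] lif_order_ge_1[OF L B g]
      by (intro growth_bound_mono) auto
    also have "\<dots> \<le> T * cmod w0"
      using lif_growth_along_inverse_segment[OF L B g \<open>open W\<close> G \<open>G 0 = 0\<close> inverse segment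
          \<open>w0 \<noteq> 0\<close> T(1,2)] .
    also have "\<dots> \<le> cmod w0"
      using T by (simp add: mult_left_le_one_le)
    finally show ?thesis .
  qed
  moreover have "lif_order F \<noteq> 0"
    using lif_order_ge_1[OF L B g] by simp
  ultimately have "growth_bound (lif_order F) r \<le> cmod w0"
    using growth_bound_le_of_below[OF _ r] by blast
  with w0(2) show ?thesis
    by simp
qed

lemma lif_univalent_growth:
  assumes L: "linear_invariant_family F" and B: "bdd_above ((\<lambda>f. cmod (coeff2 f)) ` F)"
    and g: "g \<in> F" and inj: "inj_on g unit_disk" and \<zeta>: "\<zeta> \<in> unit_disk"
  shows "growth_bound (lif_order F) (cmod \<zeta>) \<le> cmod (g \<zeta>)"
proof (cases "\<zeta> = 0")
  case True
  then show ?thesis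
    by simp
next
  case False
  have "g \<zeta> \<notin> g ` ball 0 (cmod \<zeta>)"
  proof
    assume "g \<zeta> \<in> g ` ball 0 (cmod \<zeta>)"
    then obtain x where x: "x \<in> ball 0 (cmod \<zeta>)" "g x = g \<zeta>"
      by auto
    moreover have "x \<in> unit_disk"
      using x(1) \<zeta> by auto
    ultimately show False
      using inj \<zeta> by (metis inj_onD mem_ball_0 less_irrefl)
  qed
  then show ?thesis
    using lif_omitted_value_bound[OF L B g inj] False \<zeta> by simp
qed

theorem mainTheorem2:
  fixes F :: "(complex \<Rightarrow> complex) set" and \<phi> :: "complex \<Rightarrow> complex" and z :: complex
  assumes "linear_invariant_family F"
    and "bdd_above ((\<lambda>f. cmod (coeff2 f)) ` F)"
    and "\<phi> \<in> F" and "inj_on \<phi> unit_disk"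
    and "z \<in> unit_disk"
  shows "(1 - (cmod z)\<^sup>2) * cmod (z * deriv \<phi> z / \<phi> z) \<le> 2 * lif_order F"
proof -
  note L = assms(1) and B = assms(2) and \<phi> = assms(3) and inj = assms(4) and z = assms(5)
  have f: "normalized_lu \<phi>"
    using linear_invariant_familyD(1)[OF L \<phi>] .
  have \<beta>: "1 \<le> lif_order F"
    using lif_order_ge_1[OF L B \<phi>] .
  show ?thesis
  proof (cases "\<phi> z = 0")
    case True
    then show ?thesis
      using \<beta> by simp \<comment> \<open>covers \<open>z = 0\<close>; the left-hand side is \<open>0\<close> since \<open>x / 0 = 0\<close>\<close>
  next
    case False
    define c where "c = (1 - (cmod z)\<^sup>2) * cmod (deriv \<phi> z)"
    have "0 < c"
      using f z unit_disk_one_minus_norm_sq_pos[OF z] by (simp add: c_def normalized_lu_def)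
    have "-z \<in> unit_disk"
      using z by simp
    have "cmod z / (2 * lif_order F) \<le> growth_bound (lif_order F) (cmod (- z))"
      using growth_bound_ge[OF \<beta>] z by simp
    also have "\<dots> \<le> cmod (koebe_transform \<phi> z (- z))"
      using lif_univalent_growth[OF L B linear_invariant_familyD(2)[OF L \<phi> z]
          inj_on_koebe_transform[OF f inj z] \<open>-z \<in> unit_disk\<close>] .
    also have "\<dots> = cmod (\<phi> z) / c"
    proof -
      have "cmod (of_real (1 - (cmod z)\<^sup>2) * deriv \<phi> z) = c"
        unfolding norm_mult norm_of_real c_def using unit_disk_one_minus_norm_sq_pos[OF z] by simp
      then show ?thesis
        by (simp only: koebe_transform_at_neg[OF f] norm_divide norm_minus_cancel)
    qed
    finally have "cmod z * c / cmod (\<phi> z) \<le> 2 * lif_order F"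
      using \<beta> \<open>0 < c\<close> False by (simp add: field_simps)
    moreover have "(1 - (cmod z)\<^sup>2) * cmod (z * deriv \<phi> z / \<phi> z) = cmod z * c / cmod (\<phi> z)"
      by (simp add: c_def norm_mult norm_divide)
    ultimately show ?thesis
      by simp
  qed
qed

end
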